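(* For every positive integer $q$ divisible by $3$, there exists a $q$-solvable undirected graph on $4q/3$ vertices with clique number $2q/3$.
   Context: A directed graph $D=(V,E)$ has arcs $E \subseteq \{(u,v)\in V^2 : u \neq v\}$; an undirected graph is identified with the directed graph having both arcs $(u,v)$ and $(v,u)$ for each edge. $N^-(v)=\{u:(u,v)\in E\}$. For $q\ge2$ let $[q]=\{0,\dots,q-1\}$. A $D$-function over $[q]$ is a map $f=(f_v)_{v\in V}:[q]^V\to[q]^V$ with each $f_v(x)$ depending only on $(x_u)_{u\in N^-(v)}$. $D$ is $q$-solvable if some $D$-function $f$ over $[q]$ has the property that for every $x\in[q]^V$ there is $v$ with $f_v(x)=x_v$. The clique number of an undirected graph is the size of its largest complete subgraph. *)

theory Defs
  imports Main "HOL-Library.FuncSet"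
begin

definition digraph :: "'v set \<Rightarrow> ('v \<Rightarrow> 'v \<Rightarrow> bool) \<Rightarrow> bool" where
  "digraph V E \<longleftrightarrow> (\<forall>u v. E u v \<longrightarrow> u \<in> V \<and> v \<in> V \<and> u \<noteq> v)"

definition undirected_graph :: "'v set \<Rightarrow> ('v \<Rightarrow> 'v \<Rightarrow> bool) \<Rightarrow> bool" where
  "undirected_graph V E \<longleftrightarrow> digraph V E \<and> (\<forall>u v. E u v \<longrightarrow> E v u)"

definition in_nbrs :: "('v \<Rightarrow> 'v \<Rightarrow> bool) \<Rightarrow> 'v \<Rightarrow> 'v set" where
  "in_nbrs E v = {u. E u v}"

text \<open>Configurations x \<in> [q]^V, represented as extensional functions V \<rightarrow> {0..<q}.\<close>
definition D_function :: "'v set \<Rightarrow> ('v \<Rightarrow> 'v \<Rightarrow> bool) \<Rightarrow> nat \<Rightarrow> ('v \<Rightarrow> ('v \<Rightarrow> nat) \<Rightarrow> nat) \<Rightarrow> bool" where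
  "D_function V E q f \<longleftrightarrow>
     (\<forall>v\<in>V. \<forall>x\<in>V \<rightarrow>\<^sub>E {..<q}. f v x < q) \<and>
     (\<forall>v\<in>V. \<forall>x\<in>V \<rightarrow>\<^sub>E {..<q}. \<forall>y\<in>V \<rightarrow>\<^sub>E {..<q}.
        (\<forall>u\<in>in_nbrs E v. x u = y u) \<longrightarrow> f v x = f v y)"

definition q_solvable :: "'v set \<Rightarrow> ('v \<Rightarrow> 'v \<Rightarrow> bool) \<Rightarrow> nat \<Rightarrow> bool" where
  "q_solvable V E q \<longleftrightarrow>
     (\<exists>f. D_function V E q f \<and> (\<forall>x\<in>V \<rightarrow>\<^sub>E {..<q}. \<exists>v\<in>V. f v x = x v))"

definition is_clique :: "'v set \<Rightarrow> ('v \<Rightarrow> 'v \<Rightarrow> bool) \<Rightarrow> 'v set \<Rightarrow> bool" where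
  "is_clique V E K \<longleftrightarrow> K \<subseteq> V \<and> (\<forall>u\<in>K. \<forall>w\<in>K. u \<noteq> w \<longrightarrow> E u w)"

definition clique_number :: "'v set \<Rightarrow> ('v \<Rightarrow> 'v \<Rightarrow> bool) \<Rightarrow> nat" where
  "clique_number V E = Max {card K | K. is_clique V E K}"

end

theory Submission
  imports Defs
begin

text \<open>The 4-cycle is 3-solvable and has clique number 2. Blowing up every vertex of a
  p-solvable graph into a clique of size k gives a pk-solvable graph: a block plays the
  base game with the class (block sum mod pk) div k, and the k vertices of the block
  cover the k possible residues of the block sum modulo k, so whenever the block guesses
  its class correctly one of its vertices guesses its own value correctly. Cliques of the
  blow-up project to cliques of the base graph, so the clique number is multiplied by k.
  Blowing up the 4-cycle with k = q/3 gives the required graph.\<close>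

lemma finite_clique_cards:
  assumes "finite V"
  shows "finite {card K | K. is_clique V E K}"
proof (rule finite_subset)
  show "{card K | K. is_clique V E K} \<subseteq> {..card V}"
    using assms by (auto simp: is_clique_def card_mono)
qed simp

lemma clique_le_clique_number:
  assumes "finite V" "is_clique V E K"
  shows "card K \<le> clique_number V E"
  unfolding clique_number_def using assms finite_clique_cards by (blast intro: Max_ge)

lemma clique_number_attained:
  assumes "finite V"
  obtains K where "is_clique V E K" "card K = clique_number V E"
proof -
  have "is_clique V E {}" by (simp add: is_clique_def)
  then have "{card K | K. is_clique V E K} \<noteq> {}"
    by blast
  then have "clique_number V E \<in> {card K | K. is_clique V E K}"
    unfolding clique_number_def using finite_clique_cards[OF assms] by (rule Max_in[rotated])
  then obtain K where "is_clique V E K" "clique_number V E = card K"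
    by auto
  then show ?thesis using that by simp
qed

lemma clique_number_eqI:
  assumes "finite V" "\<And>K. is_clique V E K \<Longrightarrow> card K \<le> m"
    and "is_clique V E K\<^sub>0" "card K\<^sub>0 = m"
  shows "clique_number V E = m"
  unfolding clique_number_def using assms finite_clique_cards by (blast intro: Max_eqI)

definition block :: "nat \<Rightarrow> nat \<Rightarrow> nat set" where
  "block k b = {b * k..<b * k + k}"

lemma finite_block [simp]: "finite (block k b)"
  by (simp add: block_def)

lemma card_block [simp]: "card (block k b) = k"
  by (simp add: block_def)

lemma mem_block_iff:
  assumes "0 < k"
  shows "u \<in> block k b \<longleftrightarrow> u div k = b"
proof
  assume "u \<in> block k b"
  then show "u div k = b"
    unfolding block_def by (intro div_nat_eqI) (auto simp: mult.commute)
next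
  assume "u div k = b"
  then show "u \<in> block k b"
    using div_times_less_eq_dividend[of u k] dividend_less_div_times[OF assms, of u]
    by (auto simp: block_def mult.commute)
qed

lemma card_UN_block:
  assumes "0 < k" "finite B"
  shows "card (\<Union>b\<in>B. block k b) = k * card B"
proof -
  have "\<forall>b\<in>B. \<forall>c\<in>B. b \<noteq> c \<longrightarrow> block k b \<inter> block k c = {}"
    by (auto simp: mem_block_iff[OF assms(1)])
  then show ?thesis
    using assms(2) by (simp add: card_UN_disjoint)
qed

lemma card_le_mult_card_image_div:
  assumes "0 < k" "finite K"
  shows "card K \<le> k * card ((\<lambda>u. u div k) ` K)"
proof -
  have "K \<subseteq> (\<Union>b\<in>(\<lambda>u. u div k) ` K. block k b)"
    using mem_block_iff[OF assms(1)] by blast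
  then have "card K \<le> card (\<Union>b\<in>(\<lambda>u. u div k) ` K. block k b)"
    using assms(2) by (intro card_mono) auto
  also have "\<dots> = k * card ((\<lambda>u. u div k) ` K)"
    by (rule card_UN_block[OF assms(1) finite_imageI[OF assms(2)]])
  finally show ?thesis .
qed

subsection \<open>Blowing up the vertices of a graph into cliques\<close>

text \<open>The lexicographic product of a graph on {..<n} with the complete graph on k vertices:
  vertex b of the base graph becomes the block of vertices u < n * k with u div k = b.\<close>
definition blowup :: "nat \<Rightarrow> nat \<Rightarrow> (nat \<Rightarrow> nat \<Rightarrow> bool) \<Rightarrow> nat \<Rightarrow> nat \<Rightarrow> bool" where
  "blowup n k E u v \<longleftrightarrow>
     u < n * k \<and> v < n * k \<and> u \<noteq> v \<and> (u div k = v div k \<or> E (u div k) (v div k))"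

lemma undirected_graph_blowup:
  assumes "undirected_graph {..<n} E"
  shows "undirected_graph {..<n * k} (blowup n k E)"
  using assms unfolding undirected_graph_def digraph_def blowup_def by auto

lemma is_clique_blowup_UN_block:
  assumes "0 < k" "is_clique {..<n} E B"
  shows "is_clique {..<n * k} (blowup n k E) (\<Union>b\<in>B. block k b)"
proof -
  have "u div k \<in> B" "u < n * k" if "u \<in> (\<Union>b\<in>B. block k b)" for u
    using that assms(2) by (auto simp: mem_block_iff[OF assms(1)] is_clique_def
        div_less_iff_less_mult[OF assms(1), symmetric])
  then show ?thesis
    using assms(2) unfolding is_clique_def blowup_def by blast
qed

lemma is_clique_image_div:
  assumes "0 < k" "is_clique {..<n * k} (blowup n k E) K"
  shows "is_clique {..<n} E ((\<lambda>u. u div k) ` K)"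
  using assms unfolding is_clique_def blowup_def
  by (fastforce simp: div_less_iff_less_mult)

lemma clique_number_blowup:
  assumes "0 < k" and "clique_number {..<n} E = m"
  shows "clique_number {..<n * k} (blowup n k E) = k * m"
proof -
  obtain B where B: "is_clique {..<n} E B" "card B = m"
    using clique_number_attained[of "{..<n}" E] assms(2) by auto
  have "finite B"
    using B(1) by (auto simp: is_clique_def intro: finite_subset)
  show ?thesis
  proof (rule clique_number_eqI)
    fix K assume K: "is_clique {..<n * k} (blowup n k E) K"
    then have "finite K"
      by (auto simp: is_clique_def intro: finite_subset)
    then have "card K \<le> k * card ((\<lambda>u. u div k) ` K)"
      by (rule card_le_mult_card_image_div[OF assms(1)])
    also have "\<dots> \<le> k * m"
      using clique_le_clique_number[OF _ is_clique_image_div[OF assms(1) K]] assms(2) by simp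
    finally show "card K \<le> k * m" .
  next
    show "is_clique {..<n * k} (blowup n k E) (\<Union>b\<in>B. block k b)"
      using assms(1) B(1) by (rule is_clique_blowup_UN_block)
    show "card (\<Union>b\<in>B. block k b) = k * m"
      using assms(1) \<open>finite B\<close> B(2) by (simp add: card_UN_block)
  qed simp
qed

definition block_class :: "nat \<Rightarrow> nat \<Rightarrow> (nat \<Rightarrow> nat) \<Rightarrow> nat \<Rightarrow> nat" where
  "block_class p k x b = (sum x (block k b) mod (p * k)) div k"

definition class_profile :: "nat \<Rightarrow> nat \<Rightarrow> nat \<Rightarrow> (nat \<Rightarrow> nat) \<Rightarrow> nat \<Rightarrow> nat" where
  "class_profile n p k x = (\<lambda>b\<in>{..<n}. block_class p k x b)"

text \<open>Vertex v of block b bets that the sum of its block is congruent to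
  k * (the base guess of b) + v mod k modulo pk, and guesses its own value accordingly.\<close>
definition blowup_strategy ::
    "nat \<Rightarrow> nat \<Rightarrow> nat \<Rightarrow> (nat \<Rightarrow> (nat \<Rightarrow> nat) \<Rightarrow> nat) \<Rightarrow> nat \<Rightarrow> (nat \<Rightarrow> nat) \<Rightarrow> nat" where
  "blowup_strategy n p k f v x =
     (k * f (v div k) (class_profile n p k x) + v mod k + p * k
        - sum x (block k (v div k) - {v}) mod (p * k)) mod (p * k)"

lemma class_profile_in_funcset:
  assumes "0 < p" "0 < k"
  shows "class_profile n p k x \<in> {..<n} \<rightarrow>\<^sub>E {..<p}"
  using assms by (simp add: class_profile_def block_class_def less_mult_imp_div_less)

lemma mod_add_diff_mod_cancel:
  fixes b y m :: nat
  assumes "y < m"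
  shows "((b + y) mod m + m - b mod m) mod m = y"
proof -
  have r: "b mod m < m" using assms by simp
  have "(b + y) mod m = (b mod m + y) mod m" by (simp add: mod_add_left_eq)
  then show ?thesis
    using assms r by (cases "b mod m + y < m") (auto simp: le_mod_geq)
qed

lemma blowup_strategy_wins:
  assumes "0 < k" "b < n" "x \<in> {..<n * k} \<rightarrow>\<^sub>E {..<p * k}"
    and "f b (class_profile n p k x) = block_class p k x b"
  shows "\<exists>v\<in>block k b. blowup_strategy n p k f v x = x v"
proof -
  define s where "s = sum x (block k b) mod (p * k)"
  define v where "v = b * k + s mod k"
  have v: "v \<in> block k b" "v div k = b" "v mod k = s mod k"
    using assms(1) by (simp_all add: v_def block_def)
  have "v < n * k"
    using v(2) assms(2) by (simp add: div_less_iff_less_mult[OF assms(1), symmetric])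
  then have xv: "x v < p * k"
    using assms(3) by auto
  have "k * f b (class_profile n p k x) + v mod k = s"
    using assms(4) v(3) by (simp add: block_class_def s_def)
  moreover have "sum x (block k b) = sum x (block k b - {v}) + x v"
    using v(1) by (simp add: sum.remove add.commute)
  ultimately have "blowup_strategy n p k f v x = x v"
    using mod_add_diff_mod_cancel[OF xv] v(2)
    by (simp add: blowup_strategy_def s_def)
  with v(1) show ?thesis ..
qed

lemma blowup_strategy_local:
  assumes "digraph {..<n} E" "D_function {..<n} E p f" "0 < p" "0 < k" "v < n * k"
    and agree: "\<forall>u\<in>in_nbrs (blowup n k E) v. x u = y u"
  shows "blowup_strategy n p k f v x = blowup_strategy n p k f v y"
proof -
  have vn: "v div k < n"
    using assms(4,5) by (simp add: div_less_iff_less_mult)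
  have agree_block: "x u = y u"
    if "u \<in> block k b" "b < n" "b = v div k \<or> E b (v div k)" "u \<noteq> v" for u b
  proof -
    have "u div k = b" using that(1) assms(4) by (simp add: mem_block_iff)
    then have "blowup n k E u v"
      using that(2-4) assms(5) by (auto simp: blowup_def div_less_iff_less_mult[OF assms(4), symmetric])
    then show ?thesis using agree by (simp add: in_nbrs_def)
  qed
  have own: "sum x (block k (v div k) - {v}) = sum y (block k (v div k) - {v})"
    using vn by (intro sum.cong refl agree_block) auto
  have nbrs: "\<forall>b\<in>in_nbrs E (v div k). class_profile n p k x b = class_profile n p k y b"
  proof
    fix b assume "b \<in> in_nbrs E (v div k)"
    then have "E b (v div k)" "b < n" "b \<noteq> v div k"
      using assms(1) by (auto simp: in_nbrs_def digraph_def)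
    moreover from this have "sum x (block k b) = sum y (block k b)"
      by (intro sum.cong refl agree_block) (auto simp: mem_block_iff[OF assms(4)])
    ultimately show "class_profile n p k x b = class_profile n p k y b"
      by (simp add: class_profile_def block_class_def)
  qed
  have "f (v div k) (class_profile n p k x) = f (v div k) (class_profile n p k y)"
    using assms(2) vn nbrs class_profile_in_funcset[OF assms(3,4)]
    unfolding D_function_def by blast
  then show ?thesis
    using own by (simp add: blowup_strategy_def)
qed

theorem q_solvable_blowup:
  assumes "digraph {..<n} E" "q_solvable {..<n} E p" "0 < p" "0 < k"
  shows "q_solvable {..<n * k} (blowup n k E) (p * k)"
proof -
  obtain f where f: "D_function {..<n} E p f"
    and wins: "\<forall>c\<in>{..<n} \<rightarrow>\<^sub>E {..<p}. \<exists>b\<in>{..<n}. f b c = c b"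
    using assms(2) by (auto simp: q_solvable_def)
  have "D_function {..<n * k} (blowup n k E) (p * k) (blowup_strategy n p k f)"
    unfolding D_function_def
  proof (intro conjI ballI impI)
    show "blowup_strategy n p k f v x < p * k" for v x
      unfolding blowup_strategy_def using assms(3,4) by (intro mod_less_divisor) simp
    show "blowup_strategy n p k f v x = blowup_strategy n p k f v y"
      if "v \<in> {..<n * k}" "x \<in> {..<n * k} \<rightarrow>\<^sub>E {..<p * k}" "y \<in> {..<n * k} \<rightarrow>\<^sub>E {..<p * k}"
        "\<forall>u\<in>in_nbrs (blowup n k E) v. x u = y u" for v x y
      using that by (intro blowup_strategy_local[OF assms(1) f assms(3,4)]) auto
  qed
  moreover have "\<exists>v\<in>{..<n * k}. blowup_strategy n p k f v x = x v"
    if x: "x \<in> {..<n * k} \<rightarrow>\<^sub>E {..<p * k}" for x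
  proof -
    obtain b where "b < n" "f b (class_profile n p k x) = class_profile n p k x b"
      using wins class_profile_in_funcset[OF assms(3,4)] by blast
    then have "f b (class_profile n p k x) = block_class p k x b"
      by (simp add: class_profile_def)
    then obtain v where "v \<in> block k b" "blowup_strategy n p k f v x = x v"
      using blowup_strategy_wins[OF assms(4) \<open>b < n\<close> x] by blast
    moreover have "v < n * k"
      using \<open>v \<in> block k b\<close> \<open>b < n\<close>
      by (simp add: mem_block_iff[OF assms(4)] div_less_iff_less_mult[OF assms(4), symmetric])
    ultimately show ?thesis by blast
  qed
  ultimately show ?thesis
    unfolding q_solvable_def by blast
qed

subsection \<open>The 4-cycle\<close>

definition cycle4 :: "nat \<Rightarrow> nat \<Rightarrow> bool" where
  "cycle4 r s \<longleftrightarrow> r < 4 \<and> s < 4 \<and> odd (r + s)"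

text \<open>Row r lists the guesses of vertex r of the 4-cycle; the entry at 3a + b is the guess
  when its neighbours carry the values a and b (vertices 1 and 3 for even r, 0 and 2 for odd r).\<close>
definition cycle4_table :: "nat list list" where
  "cycle4_table =
     [[0,0,1,1,0,2,2,1,2], [2,2,1,2,1,0,1,0,0], [0,1,0,1,2,0,2,2,1], [0,2,2,1,0,2,1,1,0]]"

definition cycle4_strategy :: "nat \<Rightarrow> (nat \<Rightarrow> nat) \<Rightarrow> nat" where
  "cycle4_strategy r c =
     (if even r then cycle4_table ! r ! (3 * c 1 + c 3) else cycle4_table ! r ! (3 * c 0 + c 2))"

lemma cycle4_table_less:
  assumes "r < 4" "i < 9"
  shows "cycle4_table ! r ! i < 3"
proof -
  have rows: "\<forall>row\<in>set cycle4_table. length row = 9 \<and> set row \<subseteq> {..<3}"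
    by (simp add: cycle4_table_def)
  have "cycle4_table ! r \<in> set cycle4_table"
    using assms(1) by (intro nth_mem) (simp add: cycle4_table_def)
  then have "length (cycle4_table ! r) = 9" "set (cycle4_table ! r) \<subseteq> {..<3}"
    using rows by blast+
  moreover have "cycle4_table ! r ! i \<in> set (cycle4_table ! r)"
    using assms(2) calculation(1) by (intro nth_mem) simp
  ultimately show ?thesis
    by blast
qed

lemma undirected_graph_cycle4: "undirected_graph {..<4} cycle4"
  by (auto simp: undirected_graph_def digraph_def cycle4_def)

lemma clique_number_cycle4: "clique_number {..<4} cycle4 = 2"
proof (rule clique_number_eqI)
  fix K assume K: "is_clique {..<4} cycle4 K"
  then have fin: "finite K"
    by (auto simp: is_clique_def intro: finite_subset)
  have "card {u\<in>K. even u} \<le> 1" "card {u\<in>K. odd u} \<le> 1"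
    using K fin by (auto simp: card_le_Suc0_iff_eq is_clique_def cycle4_def)
  moreover have "card K \<le> card {u\<in>K. even u} + card {u\<in>K. odd u}"
    by (rule order_trans[OF card_mono card_Un_le]) (use fin in auto)
  ultimately show "card K \<le> 2" by simp
next
  show "is_clique {..<4} cycle4 {0, 1}"
    by (simp add: is_clique_def cycle4_def)
qed simp_all

lemma cycle4_table_wins:
  assumes "c 0 < 3" "c 1 < 3" "c 2 < 3" "c 3 < 3"
  shows "\<exists>r\<in>{..<4}. cycle4_strategy r c = c r"
proof -
  have table: "\<forall>c\<^sub>0\<in>{0,1,2::nat}. \<forall>c\<^sub>1\<in>{0,1,2::nat}. \<forall>c\<^sub>2\<in>{0,1,2::nat}. \<forall>c\<^sub>3\<in>{0,1,2::nat}.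
    c\<^sub>0 = cycle4_table ! 0 ! (3 * c\<^sub>1 + c\<^sub>3) \<or> c\<^sub>1 = cycle4_table ! 1 ! (3 * c\<^sub>0 + c\<^sub>2) \<or>
    c\<^sub>2 = cycle4_table ! 2 ! (3 * c\<^sub>1 + c\<^sub>3) \<or> c\<^sub>3 = cycle4_table ! 3 ! (3 * c\<^sub>0 + c\<^sub>2)"
    by (simp add: cycle4_table_def)
  have "c 0 \<in> {0,1,2}" "c 1 \<in> {0,1,2}" "c 2 \<in> {0,1,2}" "c 3 \<in> {0,1,2}"
    using assms by auto
  then have "c 0 = cycle4_table ! 0 ! (3 * c 1 + c 3) \<or> c 1 = cycle4_table ! 1 ! (3 * c 0 + c 2) \<or>
      c 2 = cycle4_table ! 2 ! (3 * c 1 + c 3) \<or> c 3 = cycle4_table ! 3 ! (3 * c 0 + c 2)"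
    by (rule table[rule_format])
  then have "cycle4_strategy 0 c = c 0 \<or> cycle4_strategy 1 c = c 1 \<or>
      cycle4_strategy 2 c = c 2 \<or> cycle4_strategy 3 c = c 3"
    by (simp add: cycle4_strategy_def eq_commute)
  moreover have "{0, 1, 2, 3} \<subseteq> {..<4::nat}"
    by auto
  ultimately show ?thesis
    by blast
qed

lemma q_solvable_cycle4: "q_solvable {..<4} cycle4 3"
  unfolding q_solvable_def
proof (intro exI conjI ballI)
  show "D_function {..<4} cycle4 3 cycle4_strategy"
    unfolding D_function_def
  proof (intro conjI ballI impI)
    show "cycle4_strategy r c < 3" if "r \<in> {..<4}" "c \<in> {..<4} \<rightarrow>\<^sub>E {..<3}" for r c
    proof -
      have bound: "c s < 3" if "s < 4" for s
        using \<open>c \<in> {..<4} \<rightarrow>\<^sub>E {..<3}\<close> that by auto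
      have "3 * c 1 + c 3 < 9" "3 * c 0 + c 2 < 9"
        using bound[of 0] bound[of 1] bound[of 2] bound[of 3] by simp_all
      then show ?thesis
        using \<open>r \<in> {..<4}\<close> by (simp add: cycle4_strategy_def cycle4_table_less)
    qed
    show "cycle4_strategy r c = cycle4_strategy r d"
      if "r \<in> {..<4}" "\<forall>s\<in>in_nbrs cycle4 r. c s = d s" for r c d
    proof -
      have "c s = d s" if "s < 4" "odd (r + s)" for s
        using \<open>\<forall>s\<in>in_nbrs cycle4 r. c s = d s\<close> \<open>r \<in> {..<4}\<close> that
        by (simp add: in_nbrs_def cycle4_def)
      then show ?thesis
        by (simp add: cycle4_strategy_def)
    qed
  qed
  show "\<exists>r\<in>{..<4}. cycle4_strategy r c = c r" if "c \<in> {..<4} \<rightarrow>\<^sub>E {..<3}" for c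
  proof -
    have "c s < 3" if "s < 4" for s
      using \<open>c \<in> {..<4} \<rightarrow>\<^sub>E {..<3}\<close> that by auto
    then show ?thesis
      by (intro cycle4_table_wins) simp_all
  qed
qed

theorem corollary6:
  fixes q :: nat
  assumes "0 < q" and "3 dvd q"
  shows "\<exists>(V :: nat set) E. finite V \<and> card V = 4 * q div 3 \<and> undirected_graph V E \<and>
           q_solvable V E q \<and> clique_number V E = 2 * q div 3"
proof -
  obtain k where q: "q = 3 * k" using assms(2) by blast
  then have "0 < k" using assms(1) by simp
  have "undirected_graph {..<4 * k} (blowup 4 k cycle4)"
    using undirected_graph_blowup[OF undirected_graph_cycle4] .
  moreover have "q_solvable {..<4 * k} (blowup 4 k cycle4) q"
    using q_solvable_blowup[OF _ q_solvable_cycle4 _ \<open>0 < k\<close>] undirected_graph_cycle4 q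
    by (simp add: undirected_graph_def)
  moreover have "clique_number {..<4 * k} (blowup 4 k cycle4) = 2 * k"
    using clique_number_blowup[OF \<open>0 < k\<close> clique_number_cycle4] by simp
  moreover have "4 * q div 3 = 4 * k" "2 * q div 3 = 2 * k"
    using q by simp_all
  ultimately show ?thesis
    by (metis card_lessThan finite_lessThan)
qed

end
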